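(* For all finite posets $P$ and $Q$, $$\operatorname{g\text{-}set}(P/Q)=\operatorname{g\text{-}set}(Q)\cup\{\operatorname{mex}_i(\operatorname{g\text{-}set}(Q)) : i\in\operatorname{g\text{-}set}(P)\}.$$
   Context: For a finite poset $P$ and $x\in P$ let $P_x:=\{y\in P: x\not\le y\}$. The g-number is defined recursively by $g(P):=\operatorname{mex}\{g(P_x):x\in P\}$ and the g-set by $\operatorname{g\text{-}set}(P):=\{g(P_x):x\in P\}$, where for a finite $A\subseteq\mathbb N$, $\operatorname{mex}A=\operatorname{mex}_0A$ is the least natural number not in $A$, and $\operatorname{mex}_iA:=\min(\mathbb N\setminus(A\cup\{\operatorname{mex}_0A,\dots,\operatorname{mex}_{i-1}A\}))$ is the $i$-th (0-indexed) least natural number not in $A$. The series union $P/Q$ is the disjoint union of $P$ and $Q$ with their orders kept and every point of $P$ placed above every point of $Q$. *)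

theory Defs
  imports Main
begin

text \<open>A finite poset is a pair (A, r) with r a relation (set of pairs) such that
  partial_order_on A r holds and A is finite.\<close>

definition mex :: "nat set \<Rightarrow> nat" where
  "mex S = (LEAST n. n \<notin> S)"

fun mexs :: "nat set \<Rightarrow> nat \<Rightarrow> nat set" where
  "mexs S 0 = {}"
| "mexs S (Suc i) = mexs S i \<union> {mex (S \<union> mexs S i)}"

definition mexi :: "nat set \<Rightarrow> nat \<Rightarrow> nat" where
  "mexi S i = mex (S \<union> mexs S i)"

definition subposet_carrier :: "'a set \<Rightarrow> ('a \<times> 'a) set \<Rightarrow> 'a \<Rightarrow> 'a set" where
  "subposet_carrier A r x = {y \<in> A. (x, y) \<notin> r}"

text \<open>g-number with a fuel argument; for a finite poset the fuel card A suffices,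
  since each passage to P_x removes at least x (reflexivity).\<close>
fun gnum_fuel :: "nat \<Rightarrow> 'a set \<Rightarrow> ('a \<times> 'a) set \<Rightarrow> nat" where
  "gnum_fuel 0 A r = 0"
| "gnum_fuel (Suc n) A r =
     mex ((\<lambda>x. let B = subposet_carrier A r x in gnum_fuel n B (r \<inter> (B \<times> B))) ` A)"

definition gnum :: "'a set \<Rightarrow> ('a \<times> 'a) set \<Rightarrow> nat" where
  "gnum A r = gnum_fuel (card A) A r"

definition gset :: "'a set \<Rightarrow> ('a \<times> 'a) set \<Rightarrow> nat set" where
  "gset A r = (\<lambda>x. let B = subposet_carrier A r x in gnum B (r \<inter> (B \<times> B))) ` A"

text \<open>Series union P/Q: P (tagged Inl) placed above Q (tagged Inr).\<close>
definition series_rel :: "('a \<times> 'a) set \<Rightarrow> ('b \<times> 'b) set \<Rightarrow> 'a set \<Rightarrow> 'b set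
    \<Rightarrow> (('a + 'b) \<times> ('a + 'b)) set" where
  "series_rel rP rQ A B =
     {(Inl a, Inl a') | a a'. (a, a') \<in> rP}
   \<union> {(Inr b, Inr b') | b b'. (b, b') \<in> rQ}
   \<union> {(Inr b, Inl a) | a b. a \<in> A \<and> b \<in> B}"

end

theory Submission
  imports Defs
begin

text \<open>Deleting a point of P from P/Q leaves P_x/Q, and deleting a point y of Q leaves
  only Q_y, because y lies below all of P. Since mex_i S, for i = 0, 1, ..., enumerates
  the complement of S in increasing order, mex (S \<union> mex_i S ` T) = mex_(mex T) S; so
  induction on P gives g(P/Q) = mex_(g P) (g-set Q), and the g-set formula follows.\<close>

lemma mex_le: "n \<notin> X \<Longrightarrow> mex X \<le> n"
  unfolding mex_def by (rule Least_le)

lemma mex_notin: "finite X \<Longrightarrow> mex X \<notin> X"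
  unfolding mex_def by (rule LeastI_ex) (metis ex_new_if_finite infinite_UNIV_nat)

lemma less_mex_imp_mem: "m < mex X \<Longrightarrow> m \<in> X"
  unfolding mex_def using not_less_Least by blast

lemma mex_empty [simp]: "mex {} = 0"
  unfolding mex_def by simp

lemma mexs_eq_image_mexi: "mexs S i = mexi S ` {..<i}"
  by (induction i) (auto simp: mexi_def lessThan_Suc)

lemma finite_mexs [simp]: "finite (mexs S i)"
  by (simp add: mexs_eq_image_mexi)

lemma mexi_notin: "finite S \<Longrightarrow> mexi S i \<notin> S"
  using mex_notin[of "S \<union> mexs S i"] by (simp add: mexi_def)

lemma strict_mono_mexi:
  assumes "finite S"
  shows "strict_mono (mexi S)"
  unfolding strict_mono_Suc_iff
proof
  fix i
  have "m \<in> S \<union> mexs S (Suc i)" if "m \<le> mexi S i" for m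
    using that less_mex_imp_mem[of m "S \<union> mexs S i"] by (auto simp: mexi_def le_less)
  moreover have "mexi S (Suc i) \<notin> S \<union> mexs S (Suc i)"
    using mex_notin[of "S \<union> mexs S (Suc i)"] assms by (simp add: mexi_def)
  ultimately show "mexi S i < mexi S (Suc i)"
    by (meson not_le)
qed

lemma mexi_surj_on_complement:
  assumes "finite S" and "n \<notin> S"
  obtains i where "mexi S i = n"
proof -
  have "mexi S i \<le> n" if "\<forall>j<i. mexi S j \<noteq> n" for i
  proof -
    have "n \<notin> S \<union> mexs S i"
      using assms(2) that by (auto simp: mexs_eq_image_mexi)
    then show ?thesis
      unfolding mexi_def by (rule mex_le)
  qed
  moreover have "n < mexi S (Suc n)"
    using strict_mono_imp_increasing[OF strict_mono_mexi[OF assms(1)], of "Suc n"] by simp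
  ultimately have "\<exists>j<Suc n. mexi S j = n"
    by (meson not_le)
  with that show thesis by blast
qed

lemma mex_Un_image_mexi:
  assumes "finite S" and "finite T"
  shows "mex (S \<union> mexi S ` T) = mexi S (mex T)"
  unfolding mex_def[of "S \<union> mexi S ` T"]
proof (rule Least_equality)
  have "mexi S (mex T) \<noteq> mexi S j" if "j \<in> T" for j
    using that mex_notin[OF assms(2)] strict_mono_eq[OF strict_mono_mexi[OF assms(1)]] by metis
  then show "mexi S (mex T) \<notin> S \<union> mexi S ` T"
    using mexi_notin[OF assms(1)] by blast
next
  fix y assume y: "y \<notin> S \<union> mexi S ` T"
  obtain j where j: "mexi S j = y"
    using mexi_surj_on_complement[OF assms(1)] y by blast
  with y have "j \<notin> T" by blast
  then have "mex T \<le> j"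
    using less_mex_imp_mem not_le by blast
  then show "mexi S (mex T) \<le> y"
    using j strict_mono_less_eq[OF strict_mono_mexi[OF assms(1)]] by blast
qed

lemma finite_subposet_carrier: "finite A \<Longrightarrow> finite (subposet_carrier A r x)"
  by (simp add: subposet_carrier_def)

lemma subposet_carrier_subset: "subposet_carrier A r x \<subseteq> A"
  by (auto simp: subposet_carrier_def)

lemma card_subposet_carrier_less:
  assumes "finite A" and "x \<in> A" and "(x, x) \<in> r"
  shows "card (subposet_carrier A r x) < card A"
  using assms by (intro psubset_card_mono) (auto simp: subposet_carrier_def)

lemma gnum_fuel_eq:
  assumes "finite A" and "\<forall>x\<in>A. (x, x) \<in> r" and "card A \<le> n" and "card A \<le> m"
  shows "gnum_fuel n A r = gnum_fuel m A r"
  using assms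
proof (induction n arbitrary: m A r)
  case 0
  then show ?case by (cases m) auto
next
  case (Suc n)
  show ?case
  proof (cases "A = {}")
    case True
    then show ?thesis by (cases m) auto
  next
    case False
    with Suc.prems obtain m' where m: "m = Suc m'"
      by (cases m) auto
    have "gnum_fuel n C (r \<inter> C \<times> C) = gnum_fuel m' C (r \<inter> C \<times> C)"
      if "x \<in> A" and C: "C = subposet_carrier A r x" for x C
    proof (rule Suc.IH)
      have "card C < card A"
        unfolding C using Suc.prems(2) that by (intro card_subposet_carrier_less Suc.prems(1)) auto
      then show "card C \<le> n" and "card C \<le> m'"
        using Suc.prems(3,4) m by auto
      show "finite C" and "\<forall>y\<in>C. (y, y) \<in> r \<inter> C \<times> C"
        unfolding C using Suc.prems(1,2) by (auto simp: finite_subposet_carrier subposet_carrier_def)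
    qed
    then show ?thesis
      unfolding m gnum_fuel.simps Let_def by (intro arg_cong[where f = mex] image_cong) auto
  qed
qed

lemma gnum_eq_mex_gset:
  assumes "finite A" and "\<forall>x\<in>A. (x, x) \<in> r"
  shows "gnum A r = mex (gset A r)"
proof (cases "A = {}")
  case True
  then show ?thesis by (simp add: gnum_def gset_def)
next
  case False
  then obtain k where k: "card A = Suc k"
    using assms(1) by (metis card_0_eq not0_implies_Suc)
  have "gnum_fuel k C (r \<inter> C \<times> C) = gnum C (r \<inter> C \<times> C)"
    if "x \<in> A" and C: "C = subposet_carrier A r x" for x C
  proof -
    have "card C < card A"
      unfolding C using assms(2) that by (intro card_subposet_carrier_less assms(1)) auto
    then show ?thesis
      unfolding gnum_def C using assms k
      by (intro gnum_fuel_eq) (auto simp: finite_subposet_carrier subposet_carrier_def)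
  qed
  then show ?thesis
    unfolding gnum_def k gnum_fuel.simps gset_def Let_def
    by (intro arg_cong[where f = mex] image_cong) auto
qed

lemma gnum_fuel_image_inj:
  assumes "inj f"
  shows "gnum_fuel n (f ` A) (map_prod f f ` r) = gnum_fuel n A r"
proof (induction n arbitrary: A r)
  case 0
  then show ?case by simp
next
  case (Suc n)
  have carrier: "subposet_carrier (f ` A) (map_prod f f ` r) (f x) = f ` subposet_carrier A r x" for x
    using assms by (auto simp: subposet_carrier_def inj_eq)
  have rel: "map_prod f f ` r \<inter> f ` C \<times> f ` C = map_prod f f ` (r \<inter> C \<times> C)" for C
    using assms by (auto simp: inj_eq)
  show ?case
    unfolding gnum_fuel.simps Let_def image_image carrier rel Suc.IH ..
qed

lemma gnum_image_inj: "inj f \<Longrightarrow> gnum (f ` A) (map_prod f f ` r) = gnum A r"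
  unfolding gnum_def by (simp add: card_image inj_on_subset gnum_fuel_image_inj)

lemma subposet_carrier_series_Inl:
  "subposet_carrier (A <+> B) (series_rel rP rQ A B) (Inl a) = subposet_carrier A rP a <+> B"
  by (auto simp: subposet_carrier_def series_rel_def)

lemma subposet_carrier_series_Inr:
  "b \<in> B \<Longrightarrow> subposet_carrier (A <+> B) (series_rel rP rQ A B) (Inr b) = Inr ` subposet_carrier B rQ b"
  by (auto simp: subposet_carrier_def series_rel_def)

lemma series_rel_restrict_Plus:
  "rQ \<subseteq> B \<times> B \<Longrightarrow> C \<subseteq> A \<Longrightarrow>
    series_rel rP rQ A B \<inter> (C <+> B) \<times> (C <+> B) = series_rel (rP \<inter> C \<times> C) rQ C B"
  by (auto simp: series_rel_def)

lemma series_rel_restrict_Inr: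
  "series_rel rP rQ A B \<inter> Inr ` D \<times> Inr ` D = map_prod Inr Inr ` (rQ \<inter> D \<times> D)"
  by (auto simp: series_rel_def)

lemma gset_series_rel:
  assumes "rQ \<subseteq> B \<times> B"
  shows "gset (A <+> B) (series_rel rP rQ A B) = gset B rQ \<union>
    (\<lambda>a. let C = subposet_carrier A rP a in gnum (C <+> B) (series_rel (rP \<inter> C \<times> C) rQ C B)) ` A"
proof -
  let ?g = "\<lambda>x. let C = subposet_carrier (A <+> B) (series_rel rP rQ A B) x
                in gnum C (series_rel rP rQ A B \<inter> C \<times> C)"
  have "gset (A <+> B) (series_rel rP rQ A B) = ?g ` Inr ` B \<union> ?g ` Inl ` A"
    unfolding gset_def Plus_def image_Un by (rule Un_commute)
  also have "?g ` Inr ` B = gset B rQ"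
    unfolding gset_def image_image Let_def
    by (rule image_cong[OF refl])
       (simp add: subposet_carrier_series_Inr series_rel_restrict_Inr gnum_image_inj)
  also have "?g ` Inl ` A =
    (\<lambda>a. let C = subposet_carrier A rP a in gnum (C <+> B) (series_rel (rP \<inter> C \<times> C) rQ C B)) ` A"
    unfolding image_image Let_def subposet_carrier_series_Inl
    by (rule image_cong[OF refl]) (simp add: series_rel_restrict_Plus[OF assms subposet_carrier_subset])
  finally show ?thesis .
qed

context
  fixes B :: "'b set" and rQ :: "('b \<times> 'b) set"
  assumes finite_B: "finite B" and refl_B: "\<forall>y\<in>B. (y, y) \<in> rQ" and field_rQ: "rQ \<subseteq> B \<times> B"
begin

lemma gset_series_rel_if_gnum:
  assumes "\<And>x. x \<in> A \<Longrightarrow> let C = subposet_carrier A rP x in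
    gnum (C <+> B) (series_rel (rP \<inter> C \<times> C) rQ C B) = mexi (gset B rQ) (gnum C (rP \<inter> C \<times> C))"
  shows "gset (A <+> B) (series_rel rP rQ A B) = gset B rQ \<union> mexi (gset B rQ) ` gset A rP"
  unfolding gset_series_rel[OF field_rQ] gset_def[of A rP] image_image
  using assms by (intro arg_cong[where f = "(\<union>) (gset B rQ)"] image_cong) (auto simp: Let_def)

lemma gnum_series_rel:
  assumes "finite A" and "\<forall>x\<in>A. (x, x) \<in> rP"
  shows "gnum (A <+> B) (series_rel rP rQ A B) = mexi (gset B rQ) (gnum A rP)"
  using assms
proof (induction "card A" arbitrary: A rP rule: less_induct)
  case less
  have IH: "let C = subposet_carrier A rP x in
    gnum (C <+> B) (series_rel (rP \<inter> C \<times> C) rQ C B) = mexi (gset B rQ) (gnum C (rP \<inter> C \<times> C))"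
    if "x \<in> A" for x
  proof -
    have "card (subposet_carrier A rP x) < card A"
      using less.prems(2) that by (intro card_subposet_carrier_less less.prems(1)) auto
    then show ?thesis
      unfolding Let_def using less.prems
      by (intro less.hyps) (auto simp: finite_subposet_carrier subposet_carrier_def)
  qed
  have "finite (A <+> B)" and "\<forall>x\<in>A <+> B. (x, x) \<in> series_rel rP rQ A B"
    using less.prems finite_B refl_B by (auto simp: series_rel_def)
  moreover have "finite (gset B rQ)" and "finite (gset A rP)"
    using finite_B less.prems(1) by (simp_all add: gset_def)
  ultimately show ?case
    by (simp add: gnum_eq_mex_gset less.prems gset_series_rel_if_gnum[OF IH] mex_Un_image_mexi)
qed

lemma gset_series_rel_eq:
  assumes "finite A" and "\<forall>x\<in>A. (x, x) \<in> rP"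
  shows "gset (A <+> B) (series_rel rP rQ A B) = gset B rQ \<union> mexi (gset B rQ) ` gset A rP"
  using assms
  by (intro gset_series_rel_if_gnum)
     (auto simp: Let_def finite_subposet_carrier subposet_carrier_def intro!: gnum_series_rel)

end

theorem mainTheorem6:
  fixes A :: "'a set" and rP :: "('a \<times> 'a) set"
    and B :: "'b set" and rQ :: "('b \<times> 'b) set"
  assumes "finite A" and "partial_order_on A rP"
    and "finite B" and "partial_order_on B rQ"
  shows "gset (A <+> B) (series_rel rP rQ A B)
         = gset B rQ \<union> {mexi (gset B rQ) i | i. i \<in> gset A rP}"
proof -
  have refl: "\<forall>x\<in>A. (x, x) \<in> rP" "\<forall>y\<in>B. (y, y) \<in> rQ" and field: "rQ \<subseteq> B \<times> B"
    using assms(2,4) by (auto simp: partial_order_on_def preorder_on_def refl_on_def)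
  have "gset (A <+> B) (series_rel rP rQ A B) = gset B rQ \<union> mexi (gset B rQ) ` gset A rP"
    using gset_series_rel_eq[OF assms(3) refl(2) field assms(1) refl(1)] .
  then show ?thesis by blast
qed

end
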